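(* Let $\mathcal{A}$ be a central arrangement in $V=\mathbb{K}^\ell$, $H\in\mathcal{A}$, and let $M^p\subset\Omega^p(\mathcal{A}^H,\mathbf{k})$ be the image of $\mathbf{res}_H^p:\Omega^p(\mathcal{A})\to\Omega^p(\mathcal{A}^H,\mathbf{k})$. Then $$\sum_{p=0}^{\ell-1}P(M^p,x)\,y^p=\frac{x(1-x)}{x+y}\,\Phi(\mathcal{A};x,y),\qquad \Phi(\mathcal{A};x,y):=\sum_{p=0}^{\ell}P(\Omega^p(\mathcal{A}),x)\,y^p.$$
   Context: Notation as follows. $\mathbb{K}$ is a field of characteristic $0$, $S=\mathbb{K}[V^*]=\mathbb{K}[z_1,\dots,z_\ell]$ with $H=\{z_1=0\}$. For each hyperplane $H'$ fix a defining linear form $\alpha_{H'}$, $Q=\prod_{H'\in\mathcal{A}}\alpha_{H'}$, and $\Omega^p(\mathcal{A})=\{\omega\in\frac1Q\Omega^p_V: Q\frac{d\alpha_{H'}}{\alpha_{H'}}\wedge\omega\in\Omega^{p+1}_V\ \forall H'\in\mathcal{A}\}$. The restricted multiarrangement $(\mathcal{A}^H,\mathbf{k})$ on $H$ has hyperplanes $H'\cap H$ ($H'\ne H$) with multiplicity $\mathbf{k}(X)=\#\{H'\in\mathcal{A}\setminus\{H\}:H'\cap H=X\}$, and $\Omega^p(\mathcal{A}^H,\mathbf{k})=\{\omega\in\frac{1}{Q'}\Omega^p_H: Q'\frac{d\alpha_X}{\alpha_X^{\mathbf{k}(X)}}\wedge\omega\in\Omega^{p+1}_H\ \forall X\}$,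 $Q'=\prod_X\alpha_X^{\mathbf{k}(X)}$. Every $\omega\in\Omega^p(\mathcal{A})$ is uniquely $\omega_1+\frac{dz_1}{z_1}\wedge\omega_2$ with $\omega_1,\omega_2$ involving only $dz_2,\dots,dz_\ell$, and $\mathbf{res}^p_H(\omega)=\omega_1|_H$; $M^p$ is a graded $\mathbb{K}[H]=S/z_1S$-module. Grading convention: $\deg z_i=1$, $\deg dz_i=0$ (so e.g. $\frac1Q\Omega^\ell_V$ has lowest degree $-\#\mathcal{A}$). For a finitely generated graded module $M$, the Hilbert series is $P(M,x)=\sum_{p\in\mathbb{Z}}(\dim_\mathbb{K}M_p)x^p\in\mathbb{Z}[x^{-1}][[x]]$. *)

theory Defs
  imports "HOL-Library.Poly_Mapping" "HOL-Library.Function_Algebras"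
    "HOL-Computational_Algebra.Polynomial"
    "HOL-Computational_Algebra.Formal_Laurent_Series"
begin

text \<open>The coordinate z_1 of the paper is the variable with index 0, z_i has index i-1.
  A linear form on V = K^l is given by its coefficient vector a :: nat => K
  (with a i = 0 for i >= l).\<close>

type_synonym 'a mpoly = "(nat \<Rightarrow>\<^sub>0 nat) \<Rightarrow>\<^sub>0 'a"

definition const_poly :: "'a::comm_ring_1 \<Rightarrow> 'a mpoly" where
  "const_poly c = Poly_Mapping.single 0 c"

definition var_poly :: "nat \<Rightarrow> 'a::comm_ring_1 mpoly" where
  "var_poly i = Poly_Mapping.single (Poly_Mapping.single i 1) 1"

definition lform :: "nat \<Rightarrow> (nat \<Rightarrow> 'a::comm_ring_1) \<Rightarrow> 'a mpoly" where
  "lform l a = (\<Sum>i<l. const_poly (a i) * var_poly i)"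

definition poly_in_vars :: "nat set \<Rightarrow> 'a::zero mpoly \<Rightarrow> bool" where
  "poly_in_vars V f \<longleftrightarrow> (\<forall>m\<in>Poly_Mapping.keys f. Poly_Mapping.keys m \<subseteq> V)"

definition homog :: "int \<Rightarrow> 'a::zero mpoly \<Rightarrow> bool" where
  "homog d f \<longleftrightarrow> (\<forall>m\<in>Poly_Mapping.keys f. int (\<Sum>i\<in>Poly_Mapping.keys m. Poly_Mapping.lookup m i) = d)"

text \<open>A rational p-form in (1/Q) Omega^p_V is written (1/Q) * sum_I f_I dz_I, the sum over
  increasing p-subsets I of the coordinate indices; it is represented by its numerator family
  f :: nat set => 'a mpoly (f I = 0 unless I is a p-subset of {..<l}).
  The coefficient of dz_J (J a (p+1)-subset, in increasing order) of the form
  d(alpha_a) /\ (sum_I f_I dz_I) is the following.\<close>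
definition dwedge_coeff :: "(nat \<Rightarrow> 'a::comm_ring_1) \<Rightarrow> (nat set \<Rightarrow> 'a mpoly) \<Rightarrow> nat set \<Rightarrow> 'a mpoly" where
  "dwedge_coeff a f J =
     (\<Sum>j\<in>J. const_poly ((-1) ^ card {i\<in>J. i < j} * a j) * f (J - {j}))"

text \<open>Degree-n homogeneous part of Omega^p(A), A given by a finite set of defining linear forms,
  Q the product of them.  omega = (1/Q) sum f_I dz_I has degree n iff every f_I is homogeneous of
  degree n + |A|.  The condition Q (d alpha / alpha) /\ omega in Omega^{p+1}_V is
  (1/alpha) d alpha /\ sum f_I dz_I polynomial, i.e. alpha divides every coefficient.\<close>
definition OmegaA_deg :: "nat \<Rightarrow> (nat \<Rightarrow> 'a::field) set \<Rightarrow> nat \<Rightarrow> int \<Rightarrow> (nat set \<Rightarrow> 'a mpoly) set" where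
  "OmegaA_deg l A p n =
    {f. (\<forall>I. f I \<noteq> 0 \<longrightarrow> I \<subseteq> {..<l} \<and> card I = p)
      \<and> (\<forall>I. poly_in_vars {..<l} (f I) \<and> homog (n + int (card A)) (f I))
      \<and> (\<forall>a\<in>A. \<forall>J. J \<subseteq> {..<l} \<and> card J = Suc p \<longrightarrow> lform l a dvd dwedge_coeff a f J)}"

definition poly_quot :: "'a::comm_ring_1 mpoly \<Rightarrow> 'a mpoly \<Rightarrow> 'a mpoly" where
  "poly_quot g q = (THE r. g = q * r)"

text \<open>Restriction of a polynomial to H = {z_1 = 0}: set z_1 := 0; the result is a polynomial
  in z_2..z_l, i.e. an element of K[H].\<close>
definition restrict_H :: "'a::zero mpoly \<Rightarrow> 'a mpoly" where
  "restrict_H g = Abs_poly_mapping (\<lambda>m. if Poly_Mapping.lookup m 0 = 0 then Poly_Mapping.lookup g m else 0)"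

text \<open>Residue res_H^p for H = {alpha_h = 0}, alpha_h = c z_1.  For omega = (1/Q) sum f_I dz_I in
  Omega^p(A), omega_1 = (1/Q) sum_{0 \<notin> I} f_I dz_I = (1/(Q/alpha_h)) sum_{0 \<notin> I} (f_I/alpha_h) dz_I,
  so res_H omega = omega_1|_H = (1/Q_H) sum_{0 \<notin> I} (f_I/alpha_h)|_H dz_I with the fixed
  denominator Q_H = prod_{a in A - {h}} alpha_a|_H.  We represent res_H omega by this numerator
  family.\<close>
definition res_H :: "(nat \<Rightarrow> 'a::field) \<Rightarrow> nat \<Rightarrow> (nat set \<Rightarrow> 'a mpoly) \<Rightarrow> (nat set \<Rightarrow> 'a mpoly)" where
  "res_H h l f = (\<lambda>I. if 0 \<in> I then 0 else restrict_H (poly_quot (f I) (lform l h)))"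

text \<open>Degree-n part of M^p = res_H^p(Omega^p(A)) (res_H is homogeneous of degree 0).\<close>
definition M_deg :: "nat \<Rightarrow> (nat \<Rightarrow> 'a::field) set \<Rightarrow> (nat \<Rightarrow> 'a) \<Rightarrow> nat \<Rightarrow> int \<Rightarrow> (nat set \<Rightarrow> 'a mpoly) set" where
  "M_deg l A h p n = res_H h l ` OmegaA_deg l A p n"

definition form_scale :: "'a::field \<Rightarrow> (nat set \<Rightarrow> 'a mpoly) \<Rightarrow> (nat set \<Rightarrow> 'a mpoly)" where
  "form_scale c f = (\<lambda>I. const_poly c * f I)"

definition dimK :: "(nat set \<Rightarrow> 'a::field mpoly) set \<Rightarrow> nat" where
  "dimK W = vector_space.dim form_scale W"

definition hilbert_series :: "(int \<Rightarrow> nat) \<Rightarrow> int fls" where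
  "hilbert_series d = Abs_fls (\<lambda>n. int (d n))"

definition central_arrangement :: "nat \<Rightarrow> (nat \<Rightarrow> 'a::field) set \<Rightarrow> bool" where
  "central_arrangement l A \<longleftrightarrow> finite A
     \<and> (\<forall>a\<in>A. a \<noteq> (\<lambda>_. 0) \<and> (\<forall>i\<ge>l. a i = 0))
     \<and> (\<forall>a\<in>A. \<forall>b\<in>A. (\<exists>c. b = (\<lambda>i. c * a i)) \<longrightarrow> a = b)"

end

theory Submission
  imports Defs
begin

text \<open>For $\omega \in \Omega^p(\mathcal{A})_N$ consider the residue $\mathrm{res}_H \omega$ and, if it
  vanishes, the residue of the contraction $\iota_E \omega$ with the Euler field (which lies in
  $\Omega^{p-1}(\mathcal{A})_{N+1}$). Both vanish exactly on $z_1 \Omega^p(\mathcal{A})_{N-1}$, and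
  $\mathrm{res}_H \circ \iota_E$ maps the kernel of $\mathrm{res}_H$ onto $M^{p-1}_{N+1}$, since
  $\mathrm{res}_H(\iota_E(\frac{dz_1}{z_1} \wedge \eta)) = \mathrm{res}_H \eta$. Rank--nullity gives
  $\dim \Omega^p_N = \dim M^p_N + \dim \Omega^p_{N-1} + \dim M^{p-1}_{N+1}$, i.e.
  $x(1-x) P(\Omega^p, x) = x P(M^p, x) + P(M^{p-1}, x)$, which is the claimed identity
  coefficientwise in $y$ (with $M^\ell = 0$).\<close>

abbreviation (input) lookup :: "('a \<Rightarrow>\<^sub>0 'b::zero) \<Rightarrow> 'a \<Rightarrow> 'b"
  where "lookup \<equiv> Poly_Mapping.lookup"
abbreviation (input) keys :: "('a \<Rightarrow>\<^sub>0 'b::zero) \<Rightarrow> 'a set"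
  where "keys \<equiv> Poly_Mapping.keys"
abbreviation (input) single :: "'a \<Rightarrow> 'b \<Rightarrow> 'a \<Rightarrow>\<^sub>0 'b::zero"
  where "single \<equiv> Poly_Mapping.single"

abbreviation z1 :: "'a::comm_ring_1 mpoly" where "z1 \<equiv> var_poly 0"

section \<open>Polynomials\<close>

lemma lookup_single_mult:
  fixes g :: "('k::cancel_comm_monoid_add) \<Rightarrow>\<^sub>0 ('b::comm_semiring_1)"
  shows "lookup (single k a * g) m = (if \<exists>q. m = k + q then a * lookup g (m - k) else 0)"
proof -
  have "lookup (single k a * g) m = a * Sum_any (\<lambda>q. lookup g q when m = k + q)"
    by (simp add: lookup_mult lookup_single when_mult)
  also have "Sum_any (\<lambda>q. lookup g q when m = k + q) = (if \<exists>q. m = k + q then lookup g (m - k) else 0)"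
  proof (cases "\<exists>q. m = k + q")
    case True
    then obtain q0 where q0: "m = k + q0" by blast
    have "Sum_any (\<lambda>q. lookup g q when m = k + q) = Sum_any (\<lambda>q. lookup g q when q = q0)"
      by (rule Sum_any.cong) (auto simp: q0 when_def)
    then show ?thesis using q0 by simp
  qed (auto simp: when_def)
  finally show ?thesis by simp
qed

lemma const_poly_add: "const_poly (a + b) = const_poly a + (const_poly b :: 'a::comm_ring_1 mpoly)"
  by (simp add: const_poly_def single_add)

lemma const_poly_mult: "const_poly (a * b) = const_poly a * (const_poly b :: 'a::comm_ring_1 mpoly)"
  by (simp add: const_poly_def mult_single)

lemma const_poly_1 [simp]: "const_poly 1 = (1 :: 'a::comm_ring_1 mpoly)"
  by (simp add: const_poly_def)

lemma const_poly_0 [simp]: "const_poly 0 = (0 :: 'a::comm_ring_1 mpoly)"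
  by (simp add: const_poly_def)

lemma const_poly_uminus: "const_poly (- a) = - (const_poly a :: 'a::comm_ring_1 mpoly)"
  by (simp add: const_poly_def single_uminus)

lemma const_poly_eq_0_iff [simp]: "const_poly a = (0 :: 'a::comm_ring_1 mpoly) \<longleftrightarrow> a = 0"
  unfolding const_poly_def by (metis lookup_single_eq single_zero)

lemma lookup_const_poly_mult: "lookup (const_poly c * (p :: 'a::comm_ring_1 mpoly)) m = c * lookup p m"
  by (simp add: const_poly_def lookup_single_mult)

lemma lookup_var_poly: "lookup (var_poly i :: 'a::comm_ring_1 mpoly) m = (if m = single i 1 then 1 else 0)"
  by (simp add: var_poly_def lookup_single when_def)

lemma var_poly_neq_0 [simp]: "var_poly i \<noteq> (0::'a::comm_ring_1 mpoly)"
  unfolding var_poly_def by (metis lookup_single_eq one_neq_zero lookup_zero)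

lemma single_1_eq_iff [simp]: "single i (Suc 0) = single j (Suc 0) \<longleftrightarrow> i = j"
  by (metis lookup_single_eq lookup_single_not_eq one_neq_zero One_nat_def)

definition mon_z1 :: "nat \<Rightarrow>\<^sub>0 nat" where "mon_z1 = single 0 1"

lemma lookup_z1_mult:
  "lookup (z1 * (r :: 'a::comm_ring_1 mpoly)) m = (if lookup m 0 = 0 then 0 else lookup r (m - mon_z1))"
proof -
  have "(\<exists>q. m = mon_z1 + q) \<longleftrightarrow> lookup m 0 \<noteq> 0"
  proof
    assume "lookup m 0 \<noteq> 0"
    then have "m = mon_z1 + (m - mon_z1)"
      by (simp add: poly_mapping_eq_iff fun_eq_iff lookup_add lookup_minus lookup_single when_def mon_z1_def)
    then show "\<exists>q. m = mon_z1 + q" by blast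
  qed (auto simp: lookup_add mon_z1_def)
  moreover have "z1 = single mon_z1 (1::'a)" by (simp add: var_poly_def mon_z1_def)
  ultimately show ?thesis by (simp add: lookup_single_mult)
qed

lemma lookup_z1_mult_add_mon_z1:
  "lookup (z1 * (r :: 'a::comm_ring_1 mpoly)) (m + mon_z1) = lookup r m"
  by (simp add: lookup_z1_mult lookup_add mon_z1_def)

lemma lookup_restrict_H:
  "lookup (restrict_H g) m = (if lookup m 0 = 0 then lookup g m else 0)"
proof -
  have "finite {m. (if lookup m 0 = 0 then lookup g m else 0) \<noteq> 0}"
    by (rule finite_subset[OF _ finite_keys[of g]]) (auto simp: in_keys_iff)
  then show ?thesis by (simp add: restrict_H_def)
qed

definition div_z1 :: "'a::zero mpoly \<Rightarrow> 'a mpoly" where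
  "div_z1 g = Abs_poly_mapping (\<lambda>m. lookup g (m + mon_z1))"

lemma lookup_div_z1: "lookup (div_z1 g) m = lookup g (m + mon_z1)"
proof -
  have "{m. lookup g (m + mon_z1) \<noteq> 0} = (\<lambda>m. m + mon_z1) -` keys g"
    by (auto simp: in_keys_iff)
  moreover have "finite ((\<lambda>m. m + mon_z1) -` keys g)"
    by (rule finite_vimageI) (auto simp: inj_def)
  ultimately show ?thesis by (simp add: div_z1_def)
qed

lemma z1_mult_div_z1_add_restrict_H: "z1 * div_z1 g + restrict_H g = (g :: 'a::comm_ring_1 mpoly)"
proof -
  have "lookup (z1 * div_z1 g + restrict_H g) m = lookup g m" for m
  proof (cases "lookup m 0 = 0")
    case False
    then have "m - mon_z1 + mon_z1 = m"
      by (simp add: poly_mapping_eq_iff fun_eq_iff lookup_add lookup_minus lookup_single when_def mon_z1_def)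
    then show ?thesis
      using False by (simp add: lookup_add lookup_z1_mult lookup_restrict_H lookup_div_z1)
  qed (simp add: lookup_add lookup_z1_mult lookup_restrict_H)
  then show ?thesis by (simp add: poly_mapping_eq_iff fun_eq_iff)
qed

lemma restrict_H_z1_mult [simp]: "restrict_H (z1 * (r :: 'a::comm_ring_1 mpoly)) = 0"
  by (simp add: poly_mapping_eq_iff fun_eq_iff lookup_restrict_H lookup_z1_mult)

lemma restrict_H_0 [simp]: "restrict_H 0 = (0 :: 'a::comm_ring_1 mpoly)"
  by (simp add: poly_mapping_eq_iff fun_eq_iff lookup_restrict_H)

lemma restrict_H_add: "restrict_H (f + g) = restrict_H f + (restrict_H g :: 'a::comm_ring_1 mpoly)"
  by (simp add: poly_mapping_eq_iff fun_eq_iff lookup_restrict_H lookup_add)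

lemma restrict_H_const_poly_mult:
  "restrict_H (const_poly c * f) = const_poly c * (restrict_H f :: 'a::comm_ring_1 mpoly)"
  by (simp add: poly_mapping_eq_iff fun_eq_iff lookup_restrict_H lookup_const_poly_mult)

lemma z1_dvd_iff_restrict_H_eq_0: "z1 dvd (g :: 'a::comm_ring_1 mpoly) \<longleftrightarrow> restrict_H g = 0"
proof
  assume "restrict_H g = 0"
  then have "g = z1 * div_z1 g" using z1_mult_div_z1_add_restrict_H[of g] by simp
  then show "z1 dvd g" by (metis dvd_triv_left)
qed auto

lemma div_z1_z1_mult [simp]: "div_z1 (z1 * (r :: 'a::comm_ring_1 mpoly)) = r"
  by (simp add: poly_mapping_eq_iff fun_eq_iff lookup_div_z1 lookup_z1_mult_add_mon_z1)

lemma z1_mult_div_z1: "z1 dvd (g :: 'a::comm_ring_1 mpoly) \<Longrightarrow> z1 * div_z1 g = g"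
  by (metis dvdE div_z1_z1_mult)

lemma div_z1_0 [simp]: "div_z1 0 = (0 :: 'a::comm_ring_1 mpoly)"
  by (simp add: poly_mapping_eq_iff fun_eq_iff lookup_div_z1)

lemma div_z1_add: "div_z1 (f + g) = div_z1 f + (div_z1 g :: 'a::comm_ring_1 mpoly)"
  by (simp add: poly_mapping_eq_iff fun_eq_iff lookup_div_z1 lookup_add)

lemma div_z1_const_poly_mult:
  "div_z1 (const_poly k * f) = const_poly k * (div_z1 f :: 'a::comm_ring_1 mpoly)"
  by (simp add: poly_mapping_eq_iff fun_eq_iff lookup_div_z1 lookup_const_poly_mult)

lemma keys_add_mon: "keys (m + n :: nat \<Rightarrow>\<^sub>0 nat) = keys m \<union> keys n"
  by (auto simp: in_keys_iff lookup_add)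

lemma poly_in_vars_0 [simp]: "poly_in_vars V 0"
  by (simp add: poly_in_vars_def)

lemma poly_in_vars_add:
  "poly_in_vars V f \<Longrightarrow> poly_in_vars V g \<Longrightarrow> poly_in_vars V (f + g)"
  using keys_add[of f g] by (auto simp: poly_in_vars_def)

lemma poly_in_vars_sum:
  "(\<And>i. i \<in> S \<Longrightarrow> poly_in_vars V (f i)) \<Longrightarrow> poly_in_vars V (sum f S :: 'a::comm_ring_1 mpoly)"
  by (induction S rule: infinite_finite_induct) (auto intro: poly_in_vars_add)

lemma poly_in_vars_const_poly_mult:
  "poly_in_vars V f \<Longrightarrow> poly_in_vars V (const_poly c * (f :: 'a::comm_ring_1 mpoly))"
  by (auto simp: poly_in_vars_def in_keys_iff lookup_const_poly_mult)

lemma poly_in_vars_mult: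
  "poly_in_vars V f \<Longrightarrow> poly_in_vars V g \<Longrightarrow> poly_in_vars V (f * (g :: 'a::comm_ring_1 mpoly))"
  using keys_mult[of f g] by (fastforce simp: poly_in_vars_def keys_add_mon)

lemma poly_in_vars_var_poly: "i \<in> V \<Longrightarrow> poly_in_vars V (var_poly i :: 'a::comm_ring_1 mpoly)"
  by (simp add: poly_in_vars_def var_poly_def)

lemma poly_in_vars_z1_mult_cancel:
  assumes "poly_in_vars V (z1 * (r :: 'a::comm_ring_1 mpoly))"
  shows "poly_in_vars V r"
  unfolding poly_in_vars_def
proof
  fix m assume "m \<in> keys r"
  then have "m + mon_z1 \<in> keys (z1 * r)"
    by (simp add: in_keys_iff lookup_z1_mult_add_mon_z1)
  with assms have "keys (m + mon_z1) \<subseteq> V" by (simp add: poly_in_vars_def)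
  then show "keys m \<subseteq> V" by (simp add: keys_add_mon)
qed

lemma poly_in_vars_restrict_H: "poly_in_vars (- {0}) (restrict_H p)"
  by (auto simp: poly_in_vars_def in_keys_iff lookup_restrict_H split: if_splits)

lemma restrict_H_eq_self:
  assumes "poly_in_vars (- {0}) p"
  shows "restrict_H p = p"
proof -
  have "lookup p m = 0" if "lookup m 0 \<noteq> 0" for m
    using assms that unfolding poly_in_vars_def by (metis ComplD in_keys_iff singletonI subsetD)
  then show ?thesis by (auto simp: poly_mapping_eq_iff fun_eq_iff lookup_restrict_H)
qed

definition total_degree :: "(nat \<Rightarrow>\<^sub>0 nat) \<Rightarrow> nat" where
  "total_degree m = (\<Sum>i\<in>keys m. lookup m i)"

lemma total_degree_add: "total_degree (m + n) = total_degree m + total_degree n"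
  unfolding total_degree_def by (rule setsum_keys_plus_distrib[where f = "\<lambda>k x. x"]) auto

lemma total_degree_single [simp]: "total_degree (single i (Suc 0)) = Suc 0"
  by (simp add: total_degree_def)

lemma lookup_le_total_degree: "lookup m i \<le> total_degree m"
  unfolding total_degree_def by (cases "i \<in> keys m") (auto intro: member_le_sum simp: in_keys_iff)

lemma homog_iff: "homog d f \<longleftrightarrow> (\<forall>m\<in>keys f. int (total_degree m) = d)"
  by (simp add: homog_def total_degree_def)

lemma homog_0 [simp]: "homog d 0"
  by (simp add: homog_iff)

lemma homog_add: "homog d f \<Longrightarrow> homog d g \<Longrightarrow> homog d (f + g)"
  using keys_add[of f g] by (auto simp: homog_iff)

lemma homog_sum: "(\<And>i. i \<in> S \<Longrightarrow> homog d (f i)) \<Longrightarrow> homog d (sum f S :: 'a::comm_ring_1 mpoly)"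
  by (induction S rule: infinite_finite_induct) (auto intro: homog_add)

lemma homog_const_poly_mult: "homog d f \<Longrightarrow> homog d (const_poly c * (f :: 'a::comm_ring_1 mpoly))"
  by (auto simp: homog_iff in_keys_iff lookup_const_poly_mult)

lemma homog_var_poly_mult:
  assumes "homog d f"
  shows "homog (d + 1) (var_poly i * (f :: 'a::comm_ring_1 mpoly))"
  using keys_mult[of "var_poly i" f] assms by (fastforce simp: homog_iff total_degree_add var_poly_def)

lemma homog_z1_mult_cancel:
  assumes "homog d (z1 * (r :: 'a::comm_ring_1 mpoly))"
  shows "homog (d - 1) r"
  unfolding homog_iff
proof
  fix m assume "m \<in> keys r"
  then have "m + mon_z1 \<in> keys (z1 * r)"
    by (simp add: in_keys_iff lookup_z1_mult_add_mon_z1)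
  with assms show "int (total_degree m) = d - 1" by (auto simp: homog_iff total_degree_add mon_z1_def)
qed

lemma homog_negative_eq_0: "d < 0 \<Longrightarrow> homog d f \<Longrightarrow> f = 0"
  by (auto simp: homog_iff)

lemma lform_eq_z1_part_add:
  assumes "0 < l"
  shows "lform l a = const_poly (a 0) * z1 + (\<Sum>i\<in>{1..<l}. const_poly (a i) * var_poly i)"
  using assms by (simp add: lform_def atLeast0LessThan[symmetric] sum.atLeast_Suc_lessThan)

text \<open>A linear form $\alpha$ involving some $z_i$, $i \neq 1$, is coprime to $z_1$: if
  $z_1 X = \alpha (z_1 S + R)$ with $R$ free of $z_1$, then the $z_1$-free part of the right-hand
  side, namely $R$ times the $z_1$-free part of $\alpha$, vanishes, so $R = 0$.\<close>
lemma lform_dvd_z1_mult_cancel: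
  fixes X :: "'a::field mpoly"
  assumes l: "0 < l" and i0: "i0 \<in> {1..<l}" "a i0 \<noteq> 0"
    and dvd: "lform l a dvd z1 * X"
  shows "lform l a dvd X"
proof -
  define \<beta> where "\<beta> = (\<Sum>i\<in>{1..<l}. const_poly (a i) * (var_poly i :: 'a mpoly))"
  have lform_eq: "lform l a = const_poly (a 0) * z1 + \<beta>"
    using lform_eq_z1_part_add[OF l] by (simp add: \<beta>_def)
  have \<beta>_free: "poly_in_vars (- {0}) \<beta>"
    unfolding \<beta>_def by (auto intro!: poly_in_vars_sum poly_in_vars_const_poly_mult poly_in_vars_var_poly)
  have "lookup \<beta> (single i0 1) = (\<Sum>i\<in>{1..<l}. a i * (if i0 = i then 1 else 0))"
    by (simp add: \<beta>_def lookup_sum lookup_const_poly_mult lookup_var_poly)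
  also have "\<dots> = a i0"
    using i0 by (simp add: if_distrib[where f = "(*) _"] cong: if_cong)
  finally have "\<beta> \<noteq> 0" using i0 by auto
  from dvd obtain Y where Y: "z1 * X = lform l a * Y" by (elim dvdE)
  define R where "R = restrict_H Y"
  have "\<beta> * R = z1 * (X - lform l a * div_z1 Y - const_poly (a 0) * R)"
    using Y z1_mult_div_z1_add_restrict_H[of Y] unfolding lform_eq R_def by algebra
  then have "restrict_H (\<beta> * R) = 0" by simp
  moreover have "restrict_H (\<beta> * R) = \<beta> * R"
    by (intro restrict_H_eq_self poly_in_vars_mult \<beta>_free) (simp add: R_def poly_in_vars_restrict_H)
  ultimately have "R = 0" using \<open>\<beta> \<noteq> 0\<close> by simp
  then have "z1 * X = z1 * (lform l a * div_z1 Y)"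
    using Y z1_mult_div_z1_add_restrict_H[of Y] by (simp add: R_def algebra_simps)
  then show ?thesis by simp
qed

section \<open>Rank--nullity inside a finite-dimensional subspace\<close>

context vector_space
begin

lemma eq_0_if_in_span_and_span_Diff:
  assumes C: "independent C" and "B \<subseteq> C" and x: "x \<in> span B" "x \<in> span (C - B)"
  shows "x = 0"
proof -
  have "representation C x b = 0" for b
    using representation_extend[OF C x(1) \<open>B \<subseteq> C\<close>] representation_extend[OF C x(2)]
      representation_ne_zero[of B x b] representation_ne_zero[of "C - B" x b]
    by (cases "b \<in> B") auto
  then show ?thesis
    using sum_nonzero_representation_eq[OF C, of x] span_mono[OF \<open>B \<subseteq> C\<close>] x(1) by auto
qed

lemma dim_image_span_eq_card_Diff:
  assumes f: "Vector_Spaces.linear scale scale f"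
    and C: "independent C" "B \<subseteq> C"
    and B: "\<And>b. b \<in> B \<Longrightarrow> f b = 0"
    and kernel: "\<And>x. x \<in> span C \<Longrightarrow> f x = 0 \<Longrightarrow> x \<in> span B"
  shows "dim (f ` span C) = card (C - B)"
proof -
  interpret f: Vector_Spaces.linear scale scale f by (fact f)
  have inj: "inj_on f (span (C - B))"
  proof (subst f.inj_on_iff_eq_0[OF subspace_span], intro ballI impI)
    fix x assume x: "x \<in> span (C - B)" "f x = 0"
    then have "x \<in> span B" using kernel span_mono[of "C - B" C] by blast
    then show "x = 0" using eq_0_if_in_span_and_span_Diff[OF C] x(1) by blast
  qed
  have indep: "independent (f ` (C - B))"
    using f.dependent_inj_imageD[OF _ inj] dependent_mono[of "C - B" C] C(1) by blast
  have "f c \<in> span (f ` (C - B))" if "c \<in> C" for c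
    using that B span_base[of "f c" "f ` (C - B)"] span_zero by (cases "c \<in> B") auto
  then have "span (f ` C) \<subseteq> span (f ` (C - B))" by (intro span_minimal) auto
  then have "f ` span C \<subseteq> span (f ` (C - B))" by (simp add: f.span_image)
  moreover have "f ` (C - B) \<subseteq> f ` span C" using span_superset by blast
  ultimately have "dim (f ` span C) = card (f ` (C - B))"
    using basis_card_eq_dim[OF _ _ indep] by simp
  also have "\<dots> = card (C - B)"
    using card_image inj_on_subset[OF inj span_superset] by blast
  finally show ?thesis .
qed

lemma dim_eq_dim_image_add_dim_kernel:
  assumes f: "Vector_Spaces.linear scale scale f"
    and S: "subspace S" "S \<subseteq> span T" "finite T"
  shows "dim S = dim (f ` S) + dim {x\<in>S. f x = 0}"
proof -
  define K where "K = {x\<in>S. f x = 0}"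
  obtain B where B: "B \<subseteq> K" "independent B" "K \<subseteq> span B"
    using maximal_independent_subset[of K] by blast
  obtain C where C: "B \<subseteq> C" "C \<subseteq> S" "independent C" "S \<subseteq> span C"
    using maximal_independent_subset_extend[of B S] B(1,2) by (auto simp: K_def)
  have "finite C"
    using independent_span_bound[OF S(3) C(3)] C(2) S(2) by blast
  have span_C: "span C = S" by (rule span_subspace[OF C(2,4) S(1)])
  have "dim (f ` S) = card (C - B)"
    using dim_image_span_eq_card_Diff[OF f C(3,1)] B(1,3) span_C by (auto simp: K_def)
  then show ?thesis
    using basis_card_eq_dim[OF C(2,4,3)] basis_card_eq_dim[OF B(1,3,2)]
      card_mono[OF \<open>finite C\<close> C(1)] card_Diff_subset[OF finite_subset[OF C(1) \<open>finite C\<close>] C(1)]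
    by (simp add: K_def)
qed

end

section \<open>Forms with polynomial coefficients\<close>

type_synonym 'a form = "nat set \<Rightarrow> 'a mpoly"

interpretation form: vector_space "form_scale :: 'a::field \<Rightarrow> 'a form \<Rightarrow> 'a form"
  by unfold_locales (auto simp: form_scale_def fun_eq_iff const_poly_add const_poly_mult algebra_simps)

lemma linear_formI:
  fixes \<phi> :: "'a::field form \<Rightarrow> 'a form"
  assumes "\<And>f g. \<phi> (f + g) = \<phi> f + \<phi> g" and "\<And>c f. \<phi> (form_scale c f) = form_scale c (\<phi> f)"
  shows "Vector_Spaces.linear form_scale form_scale \<phi>"
  unfolding Vector_Spaces.linear_iff using assms form.vector_space_axioms by blast

lemma form_dim_le_0: "V \<subseteq> {0} \<Longrightarrow> form.dim (V :: 'a::field form set) = 0"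
  using form.dim_le_card[of V "{}"] by simp

lemma finite_bounded_monomials:
  "finite {m :: nat \<Rightarrow>\<^sub>0 nat. keys m \<subseteq> {..<l} \<and> total_degree m \<le> n}" (is "finite ?M")
proof (rule finite_imageD)
  have "lookup ` ?M \<subseteq> {g. \<forall>i. (i \<in> {..<l} \<longrightarrow> g i \<in> {..n}) \<and> (i \<notin> {..<l} \<longrightarrow> g i = 0)}"
  proof (intro image_subsetI CollectI allI conjI impI)
    fix m i assume m: "m \<in> ?M"
    show "lookup m i \<in> {..n}" using lookup_le_total_degree[of m i] m by auto
    show "i \<notin> {..<l} \<Longrightarrow> lookup m i = 0" using m by (auto simp: in_keys_iff)
  qed
  then show "finite (lookup ` ?M)"
    by (rule finite_subset) (intro finite_set_of_finite_funs; simp)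
qed (simp add: inj_on_def)

lemma fun_sum_apply: "(sum f S) x = (\<Sum>i\<in>S. f i x :: 'b::comm_monoid_add)"
  by (induction S rule: infinite_finite_induct) auto

definition monomial_form :: "nat set \<Rightarrow> (nat \<Rightarrow>\<^sub>0 nat) \<Rightarrow> 'a::comm_ring_1 form" where
  "monomial_form I m = (\<lambda>J. if J = I then single m 1 else 0)"

lemma sum_monomials_eq:
  assumes "finite M" "keys p \<subseteq> M"
  shows "(\<Sum>m\<in>M. const_poly (lookup p m) * single m 1) = (p :: 'a::comm_ring_1 mpoly)"
proof -
  have "lookup (\<Sum>m\<in>M. const_poly (lookup p m) * single m 1) k = lookup p k" for k
  proof -
    have "lookup (\<Sum>m\<in>M. const_poly (lookup p m) * single m 1) k
        = (\<Sum>m\<in>M. if m = k then lookup p m else 0)"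
      by (simp add: lookup_sum lookup_const_poly_mult lookup_single when_def if_distrib[where f = "(*) _"]
          cong: if_cong)
    also have "\<dots> = lookup p k" using assms by (auto simp: in_keys_iff)
    finally show ?thesis .
  qed
  then show ?thesis by (simp add: poly_mapping_eq_iff fun_eq_iff)
qed

lemma homog_forms_finite_span:
  "\<exists>T. finite T \<and> {f :: 'a::field form. (\<forall>I. f I \<noteq> 0 \<longrightarrow> I \<subseteq> {..<l})
      \<and> (\<forall>I. poly_in_vars {..<l} (f I) \<and> homog d (f I))} \<subseteq> form.span T"
proof (intro exI conjI subsetI)
  define M where "M = {m :: nat \<Rightarrow>\<^sub>0 nat. keys m \<subseteq> {..<l} \<and> total_degree m \<le> nat d}"
  have "finite M" unfolding M_def by (rule finite_bounded_monomials)
  let ?T = "(\<lambda>(I, m). monomial_form I m :: 'a form) ` (Pow {..<l} \<times> M)"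
  show "finite ?T" using \<open>finite M\<close> by simp
  fix f :: "'a form"
  assume f: "f \<in> {f. (\<forall>I. f I \<noteq> 0 \<longrightarrow> I \<subseteq> {..<l}) \<and> (\<forall>I. poly_in_vars {..<l} (f I) \<and> homog d (f I))}"
  have keys: "keys (f I) \<subseteq> M" for I
    using f by (force simp: M_def poly_in_vars_def homog_iff)
  have "f = (\<Sum>I\<in>Pow {..<l}. \<Sum>m\<in>M. form_scale (lookup (f I) m) (monomial_form I m))"
  proof
    fix J
    have "(\<Sum>I\<in>Pow {..<l}. \<Sum>m\<in>M. form_scale (lookup (f I) m) (monomial_form I m)) J
        = (\<Sum>I\<in>Pow {..<l}. \<Sum>m\<in>M. if J = I then const_poly (lookup (f I) m) * single m 1 else 0)"
      by (simp add: fun_sum_apply form_scale_def monomial_form_def if_distrib[where f = "(*) _"]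
          cong: if_cong)
    also have "\<dots> = (\<Sum>I\<in>Pow {..<l}. if J = I then (\<Sum>m\<in>M. const_poly (lookup (f I) m) * single m 1) else 0)"
      by (intro sum.cong) auto
    also have "\<dots> = f J"
      using f sum_monomials_eq[OF \<open>finite M\<close> keys[of J]] by auto
    finally show "f J = (\<Sum>I\<in>Pow {..<l}. \<Sum>m\<in>M. form_scale (lookup (f I) m) (monomial_form I m)) J"
      by simp
  qed
  also have "\<dots> \<in> form.span ?T"
    by (intro form.span_sum form.span_scale form.span_base) auto
  finally show "f \<in> form.span ?T" .
qed

text \<open>The sign of $dz_i \wedge dz_K = \pm dz_{K \cup \{i\}}$ for $i \notin K$, where $dz_K$ is
  the wedge of the $dz_k$, $k \in K$, in increasing order.\<close>
definition insert_sign :: "nat set \<Rightarrow> nat \<Rightarrow> 'a::comm_ring_1" where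
  "insert_sign K i = (-1) ^ card {k\<in>K. k < i}"

lemma dwedge_coeff_eq:
  "dwedge_coeff a f J = (\<Sum>j\<in>J. const_poly (insert_sign J j * a j) * f (J - {j}))"
  by (simp add: dwedge_coeff_def insert_sign_def)

lemma insert_sign_0 [simp]: "insert_sign J 0 = 1"
  by (simp add: insert_sign_def)

lemma insert_sign_Diff_self: "insert_sign (J - {j}) j = insert_sign J j"
  unfolding insert_sign_def by (rule arg_cong[where f = "\<lambda>K. (-1) ^ card K"]) auto

lemma insert_sign_insert_self: "insert_sign (insert i J) i = insert_sign J i"
  unfolding insert_sign_def by (rule arg_cong[where f = "\<lambda>K. (-1) ^ card K"]) auto

lemma insert_sign_mult_self: "insert_sign K i * insert_sign K i = (1 :: 'a::comm_ring_1)"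
  by (simp add: insert_sign_def flip: power_add)

lemma card_less_insert:
  assumes "finite J" "i \<notin> J"
  shows "card {k\<in>insert i J. k < j} = card {k\<in>J. k < j} + (if i < j then 1 else 0)"
proof -
  have "{k\<in>insert i J. k < j} = (if i < j then insert i {k\<in>J. k < j} else {k\<in>J. k < j})"
    by auto
  then show ?thesis using assms by simp
qed

lemma insert_sign_insert:
  assumes "finite J" "i \<notin> J"
  shows "insert_sign (insert i J) j = (if i < j then - insert_sign J j else insert_sign J j)"
  using card_less_insert[OF assms, of j] by (simp add: insert_sign_def)

lemma insert_sign_swap:
  assumes "finite J" "j \<in> J" "i \<notin> J"
  shows "insert_sign J j * insert_sign (J - {j}) i = - (insert_sign J i * insert_sign (insert i J) j :: 'a::comm_ring_1)"
proof -
  have "J = insert j (J - {j})" using assms(2) by auto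
  then have "insert_sign J i = (if j < i then - insert_sign (J - {j}) i else insert_sign (J - {j}) i :: 'a)"
    using insert_sign_insert[of "J - {j}" j i] assms(1) by simp
  moreover have "insert_sign (insert i J) j = (if i < j then - insert_sign J j else insert_sign J j :: 'a)"
    by (rule insert_sign_insert[OF assms(1,3)])
  moreover have "i \<noteq> j" using assms by auto
  ultimately show ?thesis
    by (cases "j < i") (simp_all add: mult.commute)
qed

text \<open>Contraction $\iota_E$ with the Euler vector field $E = \sum_i z_i \partial_i$, on numerators.\<close>
definition euler_contr :: "nat \<Rightarrow> 'a::comm_ring_1 form \<Rightarrow> 'a form" where
  "euler_contr l f = (\<lambda>K. \<Sum>i\<in>{..<l} - K. const_poly (insert_sign K i) * (var_poly i * f (insert i K)))"

lemma dwedge_coeff_euler_contr_expand: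
  fixes f :: "'a::comm_ring_1 form"
  assumes J: "finite J" "J \<subseteq> {..<l}"
  shows "dwedge_coeff a (euler_contr l f) J = (\<Sum>j\<in>J. const_poly (a j) * (var_poly j * f J))
    + (\<Sum>j\<in>J. \<Sum>i\<in>{..<l} - J. const_poly (insert_sign J j * a j * insert_sign (J - {j}) i)
        * (var_poly i * f (insert i (J - {j}))))"
proof -
  have "const_poly (insert_sign J j * a j) * euler_contr l f (J - {j})
      = const_poly (a j) * (var_poly j * f J)
        + (\<Sum>i\<in>{..<l} - J. const_poly (insert_sign J j * a j * insert_sign (J - {j}) i)
            * (var_poly i * f (insert i (J - {j}))))" if j: "j \<in> J" for j
  proof -
    have "{..<l} - (J - {j}) = insert j ({..<l} - J)" "insert j (J - {j}) = J" using j J by auto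
    then have "euler_contr l f (J - {j}) = const_poly (insert_sign J j) * (var_poly j * f J)
        + (\<Sum>i\<in>{..<l} - J. const_poly (insert_sign (J - {j}) i) * (var_poly i * f (insert i (J - {j}))))"
      using j J by (simp add: euler_contr_def insert_sign_Diff_self)
    moreover have "const_poly (insert_sign J j * a j) * const_poly (insert_sign J j) = const_poly (a j)"
      by (simp add: algebra_simps insert_sign_mult_self flip: const_poly_mult)
    ultimately show ?thesis
      by (simp add: distrib_left sum_distrib_left mult.assoc const_poly_mult flip: mult.assoc)
  qed
  then show ?thesis by (simp add: dwedge_coeff_eq sum.distrib)
qed

lemma euler_contr_dwedge_coeff_expand:
  fixes f :: "'a::comm_ring_1 form"
  assumes J: "finite J"
  shows "euler_contr l (dwedge_coeff a f) J = (\<Sum>i\<in>{..<l} - J. const_poly (a i) * (var_poly i * f J))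
    + (\<Sum>i\<in>{..<l} - J. \<Sum>j\<in>J. const_poly (insert_sign J i * insert_sign (insert i J) j * a j)
        * (var_poly i * f (insert i (J - {j}))))"
proof -
  have "const_poly (insert_sign J i) * (var_poly i * dwedge_coeff a f (insert i J))
      = const_poly (a i) * (var_poly i * f J)
        + (\<Sum>j\<in>J. const_poly (insert_sign J i * insert_sign (insert i J) j * a j)
            * (var_poly i * f (insert i (J - {j}))))" if i: "i \<in> {..<l} - J" for i
  proof -
    have "insert i J - {i} = J" "\<And>j. j \<in> J \<Longrightarrow> insert i J - {j} = insert i (J - {j})"
      using i by auto
    moreover have "const_poly (insert_sign J i) * const_poly (insert_sign J i * a i) = const_poly (a i)"
      by (simp add: algebra_simps insert_sign_mult_self flip: const_poly_mult)
    ultimately show ?thesis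
      using i J by (simp add: dwedge_coeff_eq insert_sign_insert_self sum_distrib_left
          const_poly_mult algebra_simps)
  qed
  then show ?thesis by (simp add: euler_contr_def sum.distrib)
qed

text \<open>Since $\iota_E$ is an antiderivation with $\iota_E(d\alpha) = \alpha$, we have
  $\iota_E(d\alpha \wedge \omega) + d\alpha \wedge \iota_E \omega = \alpha\,\omega$.\<close>
lemma dwedge_coeff_euler_contr:
  fixes f :: "'a::comm_ring_1 form"
  assumes J: "finite J" "J \<subseteq> {..<l}"
  shows "dwedge_coeff a (euler_contr l f) J + euler_contr l (dwedge_coeff a f) J = lform l a * f J"
proof -
  have cross: "(\<Sum>j\<in>J. \<Sum>i\<in>{..<l} - J. const_poly (insert_sign J j * a j * insert_sign (J - {j}) i)
        * (var_poly i * f (insert i (J - {j}))))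
    = - (\<Sum>i\<in>{..<l} - J. \<Sum>j\<in>J. const_poly (insert_sign J i * insert_sign (insert i J) j * a j)
        * (var_poly i * f (insert i (J - {j}))))"
    by (subst sum.swap) (auto simp: sum_negf const_poly_uminus insert_sign_swap[OF J(1)] algebra_simps
        intro!: sum.cong simp flip: const_poly_mult)
  have "lform l a * f J = (\<Sum>i\<in>J \<union> ({..<l} - J). const_poly (a i) * (var_poly i * f J))"
    using J by (simp add: lform_def sum_distrib_right mult.assoc Un_absorb1)
  also have "\<dots> = (\<Sum>j\<in>J. const_poly (a j) * (var_poly j * f J))
      + (\<Sum>i\<in>{..<l} - J. const_poly (a i) * (var_poly i * f J))"
    using J by (intro sum.union_disjoint) auto
  finally show ?thesis
    using cross by (simp add: dwedge_coeff_euler_contr_expand[OF J] euler_contr_dwedge_coeff_expand[OF J(1)])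
qed

definition form_mult :: "'a::comm_ring_1 mpoly \<Rightarrow> 'a form \<Rightarrow> 'a form" where
  "form_mult q f = (\<lambda>I. q * f I)"

lemma form_mult_apply [simp]: "form_mult q f I = q * f I"
  by (simp add: form_mult_def)

text \<open>Numerator of $\frac{dz_1}{z_1} \wedge \omega$ for $\omega$ with numerator $g$ (defined
  when $z_1$ divides the relevant $g_K$).\<close>
definition dlog_z1_wedge :: "'a::comm_ring_1 form \<Rightarrow> 'a form" where
  "dlog_z1_wedge g = (\<lambda>I. if 0 \<in> I then div_z1 (g (I - {0})) else 0)"

text \<open>The residue \<^const>\<open>res_H\<close> with the division by $\alpha_H = c z_1$ made explicit, so that
  it is linear on all numerator families.\<close>
definition residue :: "'a::field \<Rightarrow> 'a form \<Rightarrow> 'a form" where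
  "residue c f = (\<lambda>I. if 0 \<in> I then 0 else const_poly (1 / c) * restrict_H (div_z1 (f I)))"

lemma residue_0 [simp]: "residue c 0 = 0"
  by (simp add: residue_def fun_eq_iff)

lemma residue_eq_0_iff: "residue c f = 0 \<longleftrightarrow> c = 0 \<or> (\<forall>I. 0 \<notin> I \<longrightarrow> z1 dvd div_z1 (f I))"
  by (auto simp: residue_def fun_eq_iff z1_dvd_iff_restrict_H_eq_0)

lemma dwedge_coeff_add: "dwedge_coeff a (f + g) J = dwedge_coeff a f J + dwedge_coeff a g J"
  by (simp add: dwedge_coeff_def sum.distrib distrib_left)

lemma dwedge_coeff_form_mult: "dwedge_coeff a (form_mult q f) J = q * dwedge_coeff a f J"
  by (simp add: dwedge_coeff_def form_mult_def sum_distrib_left algebra_simps)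

lemma form_scale_eq_form_mult: "form_scale c = form_mult (const_poly c)"
  by (simp add: form_scale_def form_mult_def fun_eq_iff)

lemma euler_contr_form_mult: "euler_contr l (form_mult q f) = form_mult q (euler_contr l f)"
  by (simp add: euler_contr_def form_mult_def fun_eq_iff sum_distrib_left algebra_simps)

lemma linear_form_mult: "Vector_Spaces.linear form_scale form_scale (form_mult (q :: 'a::field mpoly))"
  by (rule linear_formI) (simp_all add: form_mult_def form_scale_def fun_eq_iff algebra_simps)

lemma linear_euler_contr: "Vector_Spaces.linear form_scale form_scale (euler_contr l :: 'a::field form \<Rightarrow> _)"
  by (rule linear_formI)
    (simp_all add: euler_contr_def form_scale_def fun_eq_iff sum.distrib distrib_left
      sum_distrib_left mult.left_commute)

lemma linear_residue: "Vector_Spaces.linear form_scale form_scale (residue c)"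
  by (rule linear_formI)
    (simp_all add: residue_def form_scale_def fun_eq_iff div_z1_add restrict_H_add
      div_z1_const_poly_mult restrict_H_const_poly_mult distrib_left mult.left_commute)

lemma OmegaA_degD:
  assumes "f \<in> OmegaA_deg l A p N"
  shows "f I \<noteq> 0 \<Longrightarrow> I \<subseteq> {..<l} \<and> card I = p"
    and "poly_in_vars {..<l} (f I)"
    and "homog (N + int (card A)) (f I)"
    and "a \<in> A \<Longrightarrow> J \<subseteq> {..<l} \<Longrightarrow> card J = Suc p \<Longrightarrow> lform l a dvd dwedge_coeff a f J"
  using assms by (simp_all add: OmegaA_deg_def)

lemma OmegaA_degI:
  assumes "\<And>I. f I \<noteq> 0 \<Longrightarrow> I \<subseteq> {..<l} \<and> card I = p"
    and "\<And>I. poly_in_vars {..<l} (f I)"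
    and "\<And>I. homog (N + int (card A)) (f I)"
    and "\<And>a J. a \<in> A \<Longrightarrow> J \<subseteq> {..<l} \<Longrightarrow> card J = Suc p \<Longrightarrow> lform l a dvd dwedge_coeff a f J"
  shows "f \<in> OmegaA_deg l A p N"
  using assms by (simp add: OmegaA_deg_def)

lemma subspace_OmegaA_deg: "form.subspace (OmegaA_deg l A p N)"
proof (rule form.subspaceI)
  show "0 \<in> OmegaA_deg l A p N"
    by (simp add: OmegaA_deg_def dwedge_coeff_def)
next
  fix f g assume f: "f \<in> OmegaA_deg l A p N" and g: "g \<in> OmegaA_deg l A p N"
  show "f + g \<in> OmegaA_deg l A p N"
  proof (rule OmegaA_degI)
    fix I assume "(f + g) I \<noteq> 0"
    then have "f I \<noteq> 0 \<or> g I \<noteq> 0" by auto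
    then show "I \<subseteq> {..<l} \<and> card I = p"
      using OmegaA_degD(1)[OF f] OmegaA_degD(1)[OF g] by blast
  qed (use OmegaA_degD[OF f] OmegaA_degD[OF g] in
      \<open>auto simp: dwedge_coeff_add intro: poly_in_vars_add homog_add\<close>)
next
  fix c f assume f: "f \<in> OmegaA_deg l A p N"
  show "form_scale c f \<in> OmegaA_deg l A p N"
    by (rule OmegaA_degI)
      (use OmegaA_degD[OF f] in \<open>auto simp: form_scale_eq_form_mult dwedge_coeff_form_mult
        intro: poly_in_vars_const_poly_mult homog_const_poly_mult\<close>)
qed

lemma OmegaA_deg_finite_span: "\<exists>T. finite T \<and> OmegaA_deg l A p N \<subseteq> form.span T"
proof -
  from homog_forms_finite_span[of l "N + int (card A)"] obtain T :: "'a form set"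
    where "finite T" and T: "{f. (\<forall>I. f I \<noteq> 0 \<longrightarrow> I \<subseteq> {..<l})
      \<and> (\<forall>I. poly_in_vars {..<l} (f I) \<and> homog (N + int (card A)) (f I))} \<subseteq> form.span T"
    by blast
  have "OmegaA_deg l A p N \<subseteq> form.span T"
    by (rule order_trans[OF _ T]) (auto simp: OmegaA_deg_def)
  with \<open>finite T\<close> show ?thesis by blast
qed

lemma subspace_kernel_residue: "form.subspace {f \<in> OmegaA_deg l A p N. residue c f = 0}"
proof -
  have "{f \<in> OmegaA_deg l A p N. residue c f = 0} = OmegaA_deg l A p N \<inter> {f. residue c f = 0}"
    by auto
  then show ?thesis
    using form.subspace_inter[OF subspace_OmegaA_deg
        module_hom.subspace_kernel[OF linear_residue[unfolded linear_iff_module_hom]]] by simp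
qed

lemma dim_form_mult_z1_image:
  assumes "form.subspace V" "V \<subseteq> form.span T" "finite T"
  shows "form.dim (form_mult z1 ` V) = form.dim (V :: 'a::field form set)"
  using form.dim_eq_dim_image_add_dim_kernel[OF linear_form_mult assms, of z1]
    form_dim_le_0[of "{f \<in> V. form_mult z1 f = 0}"]
  by (simp add: subset_iff form_mult_def fun_eq_iff)

lemma OmegaA_deg_eq_0:
  assumes "N + int (card A) < 0" and f: "f \<in> OmegaA_deg l A p N"
  shows "f = 0"
  using homog_negative_eq_0[OF assms(1) OmegaA_degD(3)[OF f]] by (simp add: fun_eq_iff)

lemma OmegaA_deg_0_euler_contr:
  assumes f: "f \<in> OmegaA_deg l A 0 N"
  shows "euler_contr l f = 0"
proof -
  have "f (insert i K) = 0" for i K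
  proof (rule ccontr)
    assume "f (insert i K) \<noteq> 0"
    then have "insert i K \<subseteq> {..<l}" "card (insert i K) = 0" using OmegaA_degD(1)[OF f] by auto
    then show False using finite_subset by fastforce
  qed
  then show ?thesis by (simp add: euler_contr_def fun_eq_iff)
qed

lemma euler_contr_OmegaA_deg:
  assumes p: "1 \<le> p" and f: "f \<in> OmegaA_deg l A p N"
  shows "euler_contr l f \<in> OmegaA_deg l A (p - 1) (N + 1)"
proof (rule OmegaA_degI)
  fix K assume "euler_contr l f K \<noteq> 0"
  then obtain i where i: "i \<in> {..<l} - K" "f (insert i K) \<noteq> 0"
    unfolding euler_contr_def by (metis (no_types, lifting) mult_zero_right sum.neutral)
  then have iK: "insert i K \<subseteq> {..<l}" "card (insert i K) = p"
    using OmegaA_degD(1)[OF f] by auto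
  then have "finite K" by (meson finite_insert finite_lessThan finite_subset)
  then show "K \<subseteq> {..<l} \<and> card K = p - 1" using i(1) iK by auto
next
  fix K
  show "poly_in_vars {..<l} (euler_contr l f K)"
    unfolding euler_contr_def
    by (intro poly_in_vars_sum poly_in_vars_const_poly_mult poly_in_vars_mult poly_in_vars_var_poly
        OmegaA_degD(2)[OF f]) simp
  have "homog (N + int (card A) + 1) (euler_contr l f K)"
    unfolding euler_contr_def
    by (intro homog_sum homog_const_poly_mult homog_var_poly_mult OmegaA_degD(3)[OF f])
  then show "homog (N + 1 + int (card A)) (euler_contr l f K)" by (simp add: algebra_simps)
next
  fix a J assume a: "a \<in> A" and J: "J \<subseteq> {..<l}" "card J = Suc (p - 1)"
  then have "finite J" using finite_subset by blast
  have "lform l a dvd euler_contr l (dwedge_coeff a f) J"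
    unfolding euler_contr_def
  proof (intro dvd_sum dvd_mult)
    fix i assume "i \<in> {..<l} - J"
    then show "lform l a dvd dwedge_coeff a f (insert i J)"
      using OmegaA_degD(4)[OF f a] J p \<open>finite J\<close> by simp
  qed
  then show "lform l a dvd dwedge_coeff a (euler_contr l f) J"
    using dwedge_coeff_euler_contr[OF \<open>finite J\<close> J(1), of a f]
    by (metis dvd_add_left_iff dvd_triv_left)
qed

lemma z1_dvd_euler_contr:
  assumes "\<And>K. 0 \<notin> K \<Longrightarrow> z1 dvd g K" and "0 \<notin> I"
  shows "z1 dvd euler_contr l g I"
  unfolding euler_contr_def
proof (intro dvd_sum)
  fix i
  show "z1 dvd const_poly (insert_sign I i) * (var_poly i * g (insert i I))"
    using assms by (cases "i = 0") simp_all
qed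

lemma residue_dlog_z1_wedge: "residue c (dlog_z1_wedge g) = 0"
  by (simp add: residue_def dlog_z1_wedge_def fun_eq_iff)

lemma residue_euler_contr_dlog_z1_wedge:
  assumes "0 < l" and z1_dvd: "\<And>K. 0 \<notin> K \<Longrightarrow> z1 dvd g K"
  shows "residue c (euler_contr l (dlog_z1_wedge g)) = residue c g"
proof -
  have "euler_contr l (dlog_z1_wedge g) K = g K" if "0 \<notin> K" for K
  proof -
    have "euler_contr l (dlog_z1_wedge g) K = (\<Sum>i\<in>{..<l} - K. if i = 0 then g K else 0)"
      unfolding euler_contr_def
    proof (rule sum.cong [OF refl])
      fix i
      have "insert 0 K - {0} = K" using that by auto
      then show "const_poly (insert_sign K i) * (var_poly i * dlog_z1_wedge g (insert i K))
          = (if i = 0 then g K else 0)"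
        using that z1_mult_div_z1[OF z1_dvd[OF that]] by (simp add: dlog_z1_wedge_def)
    qed
    also have "\<dots> = g K" using assms(1) that by simp
    finally show ?thesis .
  qed
  then show ?thesis by (simp add: residue_def fun_eq_iff)
qed

text \<open>This is $d\alpha \wedge \frac{dz_1}{z_1} \wedge \omega = - \frac{dz_1}{z_1} \wedge d\alpha
  \wedge \omega$, multiplied by $z_1$.\<close>
lemma z1_mult_dwedge_coeff_dlog_z1_wedge:
  assumes J: "finite J" "0 \<in> J" and z1_dvd: "\<And>K. 0 \<notin> K \<Longrightarrow> z1 dvd g K"
  shows "z1 * dwedge_coeff a (dlog_z1_wedge g) J = - dwedge_coeff a g (J - {0})"
proof -
  define J' where "J' = J - {0}"
  have J': "finite J'" "0 \<notin> J'" "J = insert 0 J'" using J by (auto simp: J'_def)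
  have "z1 * (const_poly (insert_sign J j * a j) * dlog_z1_wedge g (J - {j}))
      = - (const_poly (insert_sign J' j * a j) * g (J' - {j}))" if "j \<in> J'" for j
  proof -
    have "j \<noteq> 0" using that J'(2) by metis
    have "J - {j} - {0} = J' - {j}" using J' by auto
    then have "z1 * dlog_z1_wedge g (J - {j}) = g (J' - {j})"
      using J' \<open>j \<noteq> 0\<close> z1_mult_div_z1[OF z1_dvd[of "J' - {j}"]] by (simp add: dlog_z1_wedge_def)
    moreover have "insert_sign J j = - (insert_sign J' j :: 'a)"
      using insert_sign_insert[OF J'(1,2), of j] \<open>j \<noteq> 0\<close> J'(3) by simp
    ultimately show ?thesis by (simp add: const_poly_uminus mult.left_commute[of z1])
  qed
  then have "z1 * dwedge_coeff a (dlog_z1_wedge g) J = (\<Sum>j\<in>J'. - (const_poly (insert_sign J' j * a j) * g (J' - {j})))"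
    using J' by (simp add: dwedge_coeff_eq sum_distrib_left dlog_z1_wedge_def)
  then show ?thesis by (simp add: dwedge_coeff_eq sum_negf J'_def)
qed

section \<open>The residue sequence of an arrangement containing $H = \{z_1 = 0\}$\<close>

locale arrangement_with_H =
  fixes l :: nat and A :: "(nat \<Rightarrow> 'a::field) set" and h :: "nat \<Rightarrow> 'a" and c :: 'a
  assumes central: "central_arrangement l A"
    and h_in_A: "h \<in> A"
    and c_neq_0: "c \<noteq> 0"
    and h_eq: "h = (\<lambda>i. if i = 0 then c else 0)"
begin

abbreviation \<Omega> :: "nat \<Rightarrow> int \<Rightarrow> 'a form set" where
  "\<Omega> p N \<equiv> OmegaA_deg l A p N"

lemma form_vanishes_beyond_l: "a \<in> A \<Longrightarrow> l \<le> i \<Longrightarrow> a i = 0"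
  using central by (simp add: central_arrangement_def)

lemma proportional_forms_eq: "a \<in> A \<Longrightarrow> b \<in> A \<Longrightarrow> b = (\<lambda>i. k * a i) \<Longrightarrow> a = b"
  using central unfolding central_arrangement_def by blast

lemma l_pos: "0 < l"
  using form_vanishes_beyond_l[OF h_in_A, of 0] c_neq_0 by (auto simp: h_eq)

lemma lform_h: "lform l h = const_poly c * z1"
  using lform_eq_z1_part_add[OF l_pos, of h] by (simp add: h_eq)

lemma lform_dvd_z1_mult_cancel_of_neq_h:
  assumes a: "a \<in> A" "a \<noteq> h" and dvd: "lform l a dvd z1 * X"
  shows "lform l a dvd X"
proof -
  have "\<exists>i\<in>{1..<l}. a i \<noteq> 0"
  proof (rule ccontr)
    assume "\<not> ?thesis"
    then have "a i = a 0 / c * h i" for i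
      using form_vanishes_beyond_l[OF a(1), of i] c_neq_0 by (cases "i < l") (auto simp: h_eq)
    then have "h = a" using proportional_forms_eq[OF h_in_A a(1)] by blast
    then show False using a(2) by simp
  qed
  then show ?thesis using lform_dvd_z1_mult_cancel[OF l_pos _ _ dvd] by blast
qed

lemma dwedge_coeff_h:
  assumes "finite J"
  shows "dwedge_coeff h f J = (if 0 \<in> J then const_poly c * f (J - {0}) else 0)"
proof -
  have "dwedge_coeff h f J = (\<Sum>j\<in>J. if j = 0 then const_poly c * f (J - {0}) else 0)"
    unfolding dwedge_coeff_eq by (rule sum.cong) (auto simp: h_eq)
  then show ?thesis using assms by simp
qed

text \<open>This is the defining condition for $H$ itself.\<close>
lemma z1_dvd_OmegaA_deg:
  assumes f: "f \<in> \<Omega> p N" and "0 \<notin> I"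
  shows "z1 dvd f I"
proof (cases "f I = 0")
  case False
  then have I: "I \<subseteq> {..<l}" "card I = p" using OmegaA_degD(1)[OF f] by auto
  then have "finite I" using finite_subset by blast
  then have "lform l h dvd const_poly c * f I"
    using OmegaA_degD(4)[OF f h_in_A, of "insert 0 I"] I l_pos \<open>0 \<notin> I\<close> by (simp add: dwedge_coeff_h)
  then show ?thesis using c_neq_0 by (simp add: lform_h)
qed simp

lemma OmegaA_degI_z1:
  assumes "\<And>I. f I \<noteq> 0 \<Longrightarrow> I \<subseteq> {..<l} \<and> card I = p"
    and "\<And>I. poly_in_vars {..<l} (f I)"
    and "\<And>I. homog (N + int (card A)) (f I)"
    and "\<And>a J. a \<in> A \<Longrightarrow> a \<noteq> h \<Longrightarrow> J \<subseteq> {..<l} \<Longrightarrow> card J = Suc p \<Longrightarrow> lform l a dvd dwedge_coeff a f J"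
    and z1_dvd: "\<And>I. 0 \<notin> I \<Longrightarrow> z1 dvd f I"
  shows "f \<in> \<Omega> p N"
proof (rule OmegaA_degI)
  fix a J assume a: "a \<in> A" and J: "J \<subseteq> {..<l}" "card J = Suc p"
  have "finite J" using J(1) finite_subset by blast
  have "lform l h dvd dwedge_coeff h f J"
    using z1_dvd[of "J - {0}"] \<open>finite J\<close> by (simp add: dwedge_coeff_h lform_h)
  then show "lform l a dvd dwedge_coeff a f J"
    using assms(4)[OF a _ J] by blast
qed (use assms in auto)

lemma res_H_eq_residue:
  assumes f: "f \<in> \<Omega> p N"
  shows "res_H h l f = residue c f"
proof
  fix I
  show "res_H h l f I = residue c f I"
  proof (cases "0 \<in> I")
    case False
    have "f I = lform l h * (const_poly (1 / c) * div_z1 (f I))"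
      using z1_mult_div_z1[OF z1_dvd_OmegaA_deg[OF f False]] c_neq_0
      by (simp add: lform_h mult.left_commute mult.assoc flip: const_poly_mult)
    then have "poly_quot (f I) (lform l h) = const_poly (1 / c) * div_z1 (f I)"
      unfolding poly_quot_def using c_neq_0 by (intro the_equality) (simp_all add: lform_h)
    then show ?thesis using False by (simp add: res_H_def residue_def restrict_H_const_poly_mult)
  qed (simp add: res_H_def residue_def)
qed

lemma M_deg_eq: "M_deg l A h p N = residue c ` \<Omega> p N"
  unfolding M_deg_def using res_H_eq_residue by (auto intro: image_cong)

lemma form_mult_z1_OmegaA_deg:
  assumes f: "f \<in> \<Omega> p (N - 1)"
  shows "form_mult z1 f \<in> \<Omega> p N"
proof (rule OmegaA_degI)
  fix I
  show "poly_in_vars {..<l} (form_mult z1 f I)"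
    using OmegaA_degD(2)[OF f] l_pos by (simp add: poly_in_vars_mult poly_in_vars_var_poly)
  show "homog (N + int (card A)) (form_mult z1 f I)"
    using homog_var_poly_mult[OF OmegaA_degD(3)[OF f]] by simp
qed (use OmegaA_degD[OF f] in \<open>auto simp: dwedge_coeff_form_mult\<close>)

lemma dlog_z1_wedge_OmegaA_deg:
  assumes p: "1 \<le> p" and g: "g \<in> \<Omega> (p - 1) (N + 1)"
  shows "dlog_z1_wedge g \<in> \<Omega> p N"
proof (rule OmegaA_degI_z1)
  fix I assume "dlog_z1_wedge g I \<noteq> 0"
  then have I: "0 \<in> I" "g (I - {0}) \<noteq> 0" by (auto simp: dlog_z1_wedge_def split: if_splits)
  then have "I - {0} \<subseteq> {..<l}" "card (I - {0}) = p - 1" using OmegaA_degD(1)[OF g] by auto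
  moreover from this have "finite (I - {0})" using finite_subset by blast
  then have "finite I" by simp
  ultimately show "I \<subseteq> {..<l} \<and> card I = p"
    using I(1) l_pos p card_gt_0_iff[of I] by (auto simp: card_Diff_singleton)
next
  fix I
  have g_eq: "z1 * div_z1 (g (I - {0})) = g (I - {0})"
    using z1_mult_div_z1[OF z1_dvd_OmegaA_deg[OF g, of "I - {0}"]] by simp
  show "poly_in_vars {..<l} (dlog_z1_wedge g I)"
    using poly_in_vars_z1_mult_cancel[of "{..<l}" "div_z1 (g (I - {0}))"] OmegaA_degD(2)[OF g] g_eq
    by (simp add: dlog_z1_wedge_def)
  have "homog (N + 1 + int (card A) - 1) (div_z1 (g (I - {0})))"
    using homog_z1_mult_cancel OmegaA_degD(3)[OF g] g_eq by metis
  then show "homog (N + int (card A)) (dlog_z1_wedge g I)"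
    by (simp add: dlog_z1_wedge_def)
next
  fix a J assume a: "a \<in> A" "a \<noteq> h" and J: "J \<subseteq> {..<l}" "card J = Suc p"
  then have "finite J" using finite_subset by blast
  show "lform l a dvd dwedge_coeff a (dlog_z1_wedge g) J"
  proof (cases "0 \<in> J")
    case True
    have "J - {0} \<subseteq> {..<l}" "card (J - {0}) = Suc (p - 1)"
      using J True \<open>finite J\<close> p by auto
    then have "lform l a dvd dwedge_coeff a g (J - {0})"
      by (rule OmegaA_degD(4)[OF g a(1)])
    then have "lform l a dvd z1 * dwedge_coeff a (dlog_z1_wedge g) J"
      using z1_mult_dwedge_coeff_dlog_z1_wedge[OF \<open>finite J\<close> True z1_dvd_OmegaA_deg[OF g]] by simp
    then show ?thesis using lform_dvd_z1_mult_cancel_of_neq_h[OF a] by blast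
  qed (simp add: dwedge_coeff_def dlog_z1_wedge_def)
qed (simp add: dlog_z1_wedge_def)


lemma z1_dvd_if_residues_eq_0:
  assumes f: "f \<in> \<Omega> p N"
    and res: "residue c f = 0" and res_euler: "residue c (euler_contr l f) = 0"
  shows "z1 dvd f I"
proof (cases "0 \<in> I")
  case True
  define K where "K = I - {0}"
  have K: "0 \<notin> K" "insert 0 K = I" "0 \<in> {..<l} - K" using True l_pos by (auto simp: K_def)
  have "z1 * z1 dvd f J" if "0 \<notin> J" for J
    using res c_neq_0 z1_mult_div_z1[OF z1_dvd_OmegaA_deg[OF f that]] that
    by (metis residue_eq_0_iff mult_dvd_mono dvd_refl)
  then have "z1 * z1 dvd (\<Sum>i\<in>{..<l} - K - {0}. const_poly (insert_sign K i) * (var_poly i * f (insert i K)))"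
    using K(1) by (intro dvd_sum dvd_mult) auto
  then obtain R where "(\<Sum>i\<in>{..<l} - K - {0}. const_poly (insert_sign K i) * (var_poly i * f (insert i K)))
      = z1 * z1 * R" by (elim dvdE)
  moreover have "euler_contr l f K = const_poly (insert_sign K 0) * (z1 * f (insert 0 K))
      + (\<Sum>i\<in>{..<l} - K - {0}. const_poly (insert_sign K i) * (var_poly i * f (insert i K)))"
    unfolding euler_contr_def using K(3) by (intro sum.remove) simp_all
  ultimately have "euler_contr l f K = z1 * (f I + z1 * R)" using K(2) by (simp add: algebra_simps)
  moreover have "z1 dvd div_z1 (euler_contr l f K)"
    using res_euler c_neq_0 K(1) by (simp add: residue_eq_0_iff)
  ultimately show ?thesis by (simp add: dvd_add_left_iff)
qed (rule z1_dvd_OmegaA_deg[OF f])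

lemma OmegaA_deg_form_mult_z1_cancel:
  assumes f: "form_mult z1 \<eta> \<in> \<Omega> p N" and z1_dvd: "\<And>I. 0 \<notin> I \<Longrightarrow> z1 dvd \<eta> I"
  shows "\<eta> \<in> \<Omega> p (N - 1)"
proof (rule OmegaA_degI_z1)
  fix I
  show "\<eta> I \<noteq> 0 \<Longrightarrow> I \<subseteq> {..<l} \<and> card I = p"
    using OmegaA_degD(1)[OF f, of I] by auto
  show "poly_in_vars {..<l} (\<eta> I)"
    using OmegaA_degD(2)[OF f, of I] poly_in_vars_z1_mult_cancel by simp
  have "homog (N + int (card A) - 1) (\<eta> I)"
    using OmegaA_degD(3)[OF f, of I] homog_z1_mult_cancel by simp
  then show "homog (N - 1 + int (card A)) (\<eta> I)" by (simp add: algebra_simps)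
next
  fix a J assume a: "a \<in> A" "a \<noteq> h" and J: "J \<subseteq> {..<l}" "card J = Suc p"
  then have "lform l a dvd z1 * dwedge_coeff a \<eta> J"
    using OmegaA_degD(4)[OF f a(1) J] by (simp add: dwedge_coeff_form_mult)
  then show "lform l a dvd dwedge_coeff a \<eta> J" by (rule lform_dvd_z1_mult_cancel_of_neq_h[OF a])
qed (fact z1_dvd)

lemma kernel_residue_euler_contr:
  "{f \<in> \<Omega> p N. residue c f = 0 \<and> residue c (euler_contr l f) = 0} = form_mult z1 ` \<Omega> p (N - 1)"
proof (intro equalityI subsetI)
  fix f assume "f \<in> {f \<in> \<Omega> p N. residue c f = 0 \<and> residue c (euler_contr l f) = 0}"
  then have f: "f \<in> \<Omega> p N" and res: "residue c f = 0" "residue c (euler_contr l f) = 0" by auto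
  define \<eta> where "\<eta> I = div_z1 (f I)" for I
  have f_eq: "f = form_mult z1 \<eta>"
    using z1_mult_div_z1[OF z1_dvd_if_residues_eq_0[OF f res]] by (simp add: \<eta>_def fun_eq_iff)
  have "z1 dvd \<eta> I" if "0 \<notin> I" for I
    using res(1) c_neq_0 that by (simp add: residue_eq_0_iff \<eta>_def)
  then have "\<eta> \<in> \<Omega> p (N - 1)"
    using OmegaA_deg_form_mult_z1_cancel f unfolding f_eq by blast
  then show "f \<in> form_mult z1 ` \<Omega> p (N - 1)" using f_eq by blast
next
  fix f assume "f \<in> form_mult z1 ` \<Omega> p (N - 1)"
  then obtain \<eta> where \<eta>: "\<eta> \<in> \<Omega> p (N - 1)" and f: "f = form_mult z1 \<eta>" by blast
  have "residue c f = 0"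
    using z1_dvd_OmegaA_deg[OF \<eta>] by (simp add: f residue_eq_0_iff)
  moreover have "residue c (euler_contr l f) = 0"
    using z1_dvd_euler_contr[OF z1_dvd_OmegaA_deg[OF \<eta>]]
    by (simp add: f euler_contr_form_mult residue_eq_0_iff)
  ultimately show "f \<in> {f \<in> \<Omega> p N. residue c f = 0 \<and> residue c (euler_contr l f) = 0}"
    using form_mult_z1_OmegaA_deg[OF \<eta>] f by simp
qed

lemma residue_euler_contr_image:
  assumes p: "1 \<le> p"
  shows "(residue c \<circ> euler_contr l) ` {f \<in> \<Omega> p N. residue c f = 0} = residue c ` \<Omega> (p - 1) (N + 1)"
proof (intro equalityI subsetI)
  fix y assume "y \<in> (residue c \<circ> euler_contr l) ` {f \<in> \<Omega> p N. residue c f = 0}"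
  then obtain f where "f \<in> \<Omega> p N" "y = residue c (euler_contr l f)" by auto
  then show "y \<in> residue c ` \<Omega> (p - 1) (N + 1)" using euler_contr_OmegaA_deg[OF p] by blast
next
  fix y assume "y \<in> residue c ` \<Omega> (p - 1) (N + 1)"
  then obtain g where g: "g \<in> \<Omega> (p - 1) (N + 1)" and y: "y = residue c g" by blast
  have "dlog_z1_wedge g \<in> {f \<in> \<Omega> p N. residue c f = 0}"
    using dlog_z1_wedge_OmegaA_deg[OF p g] residue_dlog_z1_wedge by simp
  moreover have "y = (residue c \<circ> euler_contr l) (dlog_z1_wedge g)"
    using residue_euler_contr_dlog_z1_wedge[OF l_pos z1_dvd_OmegaA_deg[OF g]] y by simp
  ultimately show "y \<in> (residue c \<circ> euler_contr l) ` {f \<in> \<Omega> p N. residue c f = 0}" by blast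
qed


lemma dimK_OmegaA_deg_eq:
  "dimK (\<Omega> p N) = dimK (M_deg l A h p N) + dimK (\<Omega> p (N - 1))
     + (if p = 0 then 0 else dimK (M_deg l A h (p - 1) (N + 1)))"
proof -
  obtain T where T: "finite T" "\<Omega> p N \<subseteq> form.span T"
    using OmegaA_deg_finite_span[of l A p N] by (elim exE conjE)
  obtain T' where T': "finite T'" "\<Omega> p (N - 1) \<subseteq> form.span T'"
    using OmegaA_deg_finite_span[of l A p "N - 1"] by (elim exE conjE)
  define K where "K = {f \<in> \<Omega> p N. residue c f = 0}"
  have lin: "Vector_Spaces.linear form_scale form_scale (residue c \<circ> euler_contr l)"
    by (rule Vector_Spaces.linear_compose[OF linear_euler_contr linear_residue])
  have "form.dim (\<Omega> p N) = form.dim (residue c ` \<Omega> p N) + form.dim K"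
    unfolding K_def by (rule form.dim_eq_dim_image_add_dim_kernel[OF linear_residue subspace_OmegaA_deg T(2,1)])
  moreover have "form.dim K = form.dim ((residue c \<circ> euler_contr l) ` K) + form.dim (\<Omega> p (N - 1))"
  proof -
    have "{f \<in> K. (residue c \<circ> euler_contr l) f = 0} = form_mult z1 ` \<Omega> p (N - 1)"
      unfolding kernel_residue_euler_contr[symmetric] K_def by auto
    moreover have "K \<subseteq> form.span T" using T(2) by (auto simp: K_def)
    ultimately show ?thesis
      using form.dim_eq_dim_image_add_dim_kernel[OF lin subspace_kernel_residue[of l A p N c] _ T(1)]
        dim_form_mult_z1_image[OF subspace_OmegaA_deg T'(2,1)]
      by (simp add: K_def)
  qed
  moreover have "form.dim ((residue c \<circ> euler_contr l) ` K)
      = (if p = 0 then 0 else form.dim (residue c ` \<Omega> (p - 1) (N + 1)))"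
  proof (cases "p = 0")
    case True
    then have "(residue c \<circ> euler_contr l) ` K \<subseteq> {0}" by (auto simp: K_def OmegaA_deg_0_euler_contr)
    then show ?thesis using True form_dim_le_0 by simp
  next
    case False
    then show ?thesis using residue_euler_contr_image[of p N] by (simp add: K_def)
  qed
  ultimately show ?thesis by (simp add: dimK_def M_deg_eq)
qed

lemma residue_OmegaA_deg_top:
  assumes f: "f \<in> \<Omega> l N"
  shows "residue c f = 0"
proof -
  have "f I = 0" if "0 \<notin> I" for I
  proof (rule ccontr)
    assume "f I \<noteq> 0"
    then have "I = {..<l}" using OmegaA_degD(1)[OF f] by (simp add: card_subset_eq)
    then show False using that l_pos by simp
  qed
  then show ?thesis by (simp add: residue_def fun_eq_iff)
qed

lemma dimK_M_deg_top: "dimK (M_deg l A h l N) = 0"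
  unfolding dimK_def M_deg_eq by (intro form_dim_le_0) (auto simp: residue_OmegaA_deg_top)

lemma dimK_OmegaA_deg_below:
  assumes "N + int (card A) < 0"
  shows "dimK (\<Omega> p N) = 0"
  unfolding dimK_def by (intro form_dim_le_0) (auto dest: OmegaA_deg_eq_0[OF assms])

lemma dimK_M_deg_below:
  assumes "N + int (card A) < 0"
  shows "dimK (M_deg l A h p N) = 0"
  unfolding dimK_def M_deg_eq by (intro form_dim_le_0) (auto dest: OmegaA_deg_eq_0[OF assms])

end

section \<open>From the dimension recursion to the generating function\<close>

text \<open>Without a lower bound on the support of \<open>d\<close>, \<^const>\<open>Abs_fls\<close> in
  \<^const>\<open>hilbert_series\<close> yields a junk value.\<close>
lemma fls_nth_hilbert_series:
  assumes "\<And>n. n < m \<Longrightarrow> d n = 0"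
  shows "fls_nth (hilbert_series d) n = int (d n)"
  unfolding hilbert_series_def
proof (rule nth_Abs_fls_ex_nat_lower_bound)
  show "\<exists>m. \<forall>k>m. int (d (- int k)) = 0"
    by (rule exI[of _ "nat (- m)"]) (auto intro!: assms)
qed

lemma fls_nth_fls_X_mult: "fls_nth (fls_X * F) n = fls_nth F (n - 1)" for F :: "'a::semiring_1 fls"
  by (simp add: fls_X_times_conv_shift)

lemma hilbert_series_identity:
  fixes dO dM :: "nat \<Rightarrow> int \<Rightarrow> nat"
  assumes below: "\<And>p n. n < m \<Longrightarrow> dO p n = 0" "\<And>p n. n < m \<Longrightarrow> dM p n = 0"
    and top: "\<And>n. dM l n = 0"
    and rec: "\<And>p n. dO p n = dM p n + dO p (n - 1) + (if p = 0 then 0 else dM (p - 1) (n + 1))"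
  shows "[:fls_X, 1:] * (\<Sum>p<l. monom (hilbert_series (dM p)) p)
    = smult (fls_X * (1 - fls_X)) (\<Sum>p\<le>l. monom (hilbert_series (dO p)) p)"
proof -
  define HM HO where "HM p = hilbert_series (dM p)" and "HO p = hilbert_series (dO p)" for p
  have nth: "fls_nth (HM p) n = int (dM p n)" "fls_nth (HO p) n = int (dO p n)" for p n
    unfolding HM_def HO_def by (simp_all add: fls_nth_hilbert_series[of m] below)
  have series: "fls_X * HM k + (if k = 0 then 0 else HM (k - 1)) = fls_X * (1 - fls_X) * HO k" for k
  proof -
    have "fls_X * (1 - fls_X) * HO k = fls_X * HO k - fls_X * (fls_X * HO k)"
      by (simp add: algebra_simps)
    moreover have "fls_X * HM k + (if k = 0 then 0 else HM (k - 1)) = fls_X * HO k - fls_X * (fls_X * HO k)"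
      using rec[of k "n - 1" for n] by (intro fls_eqI) (simp add: fls_nth_fls_X_mult nth)
    ultimately show ?thesis by simp
  qed
  have HM_top: "HM l = 0" by (rule fls_eqI) (simp add: nth top)
  then have coeff_M: "coeff (\<Sum>p<l. monom (HM p) p) k = (if k \<le> l then HM k else 0)" for k
    by (auto simp: coeff_sum)
  have coeff_O: "coeff (\<Sum>p\<le>l. monom (HO p) p) k = (if k \<le> l then HO k else 0)" for k
    by (simp add: coeff_sum)
  have "[:fls_X, 1:] * (\<Sum>p<l. monom (HM p) p) = smult (fls_X * (1 - fls_X)) (\<Sum>p\<le>l. monom (HO p) p)"
  proof (rule poly_eqI)
    fix k
    show "coeff ([:fls_X, 1:] * (\<Sum>p<l. monom (HM p) p)) k
        = coeff (smult (fls_X * (1 - fls_X)) (\<Sum>p\<le>l. monom (HO p) p)) k"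
      using series[of k] HM_top
      by (cases k) (auto simp: coeff_pCons coeff_M coeff_O not_less_eq_eq dest: le_antisym)
  qed
  then show ?thesis by (simp add: HM_def HO_def)
qed

theorem mainTheorem2:
  fixes l :: nat and A :: "(nat \<Rightarrow> 'a::field_char_0) set" and h :: "nat \<Rightarrow> 'a" and c :: 'a
  assumes "central_arrangement l A"
    and "h \<in> A"
    and "c \<noteq> 0" and "h = (\<lambda>i. if i = 0 then c else 0)"
  shows "[:fls_X, 1:] * (\<Sum>p<l. monom (hilbert_series (\<lambda>n. dimK (M_deg l A h p n))) p)
         = smult (fls_X * (1 - fls_X)) (\<Sum>p\<le>l. monom (hilbert_series (\<lambda>n. dimK (OmegaA_deg l A p n))) p)"
proof -
  interpret arrangement_with_H l A h c
    using assms by unfold_locales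
  show ?thesis
  proof (rule hilbert_series_identity[where m = "- int (card A)"])
    fix p n assume "n < - int (card A)"
    then show "dimK (OmegaA_deg l A p n) = 0" "dimK (M_deg l A h p n) = 0"
      by (simp_all add: dimK_OmegaA_deg_below dimK_M_deg_below)
  qed (rule dimK_M_deg_top dimK_OmegaA_deg_eq)+
qed

end
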